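(* Let $W\le W'\le S_d$ with $|W':W|=2$, let $\lambda\in P_d$, and let $a\ne a_1$ be $W$-orbits in $T_\lambda$ contained in the same $W'$-orbit. Then for every $\chi\in X_W$ that separates $a$ from $a_1$ there exists $\nu\in N'$ such that $\nu\chi$ separates $a_1$ from $a$, and for every $\chi\in X_W$ that separates $a_1$ from $a$ there exists $\nu\in N'$ such that $\nu\chi$ separates $a$ from $a_1$.
   Context: Let $d\ge1$, $[d]=\{1,\dots,d\}$, $P_d$ the set of partitions of $d$. For $\lambda=(\lambda_1\ge\dots\ge\lambda_k>0)\in P_d$ a tabloid of shape $\lambda$ is a sequence $A=(A_1,\dots,A_k)$ of pairwise disjoint subsets of $[d]$ with $|A_i|=\lambda_i$; $T_\lambda$ is their set; $S_d$ acts by $\zeta A=(\zeta(A_1),\dots,\zeta(A_k))$. For $U\le S_d$, $T_{\lambda;U}$ is the set of $U$-orbits in $T_\lambda$. $N$ is the normalizer of $W$ in $S_d$ and $N'$ the intersection of $N$ with the normalizer of $W'$. $X_W$ is the group of one-dimensional complex characters of $W$; $N$ acts on it by $(\nu\chi)(\sigma)=\chi(\nu^{-1}\sigma\nu)$. For $\chi\in X_W$, $T_{\lambda;\chi}$ is the set of $W$-orbits $O_W(A)\subseteq T_\lambda$ such that $\chi\equiv1$ on the stabilizer $W_A$ of $A$ in $W$. For $a,b\in T_{\lambda;W}$, $\chi$ separates $a$ from $b$ if $a\in T_{\lambda;\chi}$ and $b\notin T_{\lambda;\chi}$. *)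

theory Defs
  imports "HOL-Combinatorics.Permutations" Complex_Main
begin

type_synonym perm = "nat \<Rightarrow> nat"

definition Sym :: "nat \<Rightarrow> perm set" where
  "Sym d = {p. p permutes {1..d}}"

definition perm_subgroup :: "nat \<Rightarrow> perm set \<Rightarrow> bool" where
  "perm_subgroup d W \<longleftrightarrow> W \<subseteq> Sym d \<and> id \<in> W \<and>
     (\<forall>s\<in>W. \<forall>t\<in>W. s \<circ> t \<in> W) \<and> (\<forall>s\<in>W. inv s \<in> W)"

definition normalizer :: "nat \<Rightarrow> perm set \<Rightarrow> perm set" where
  "normalizer d U = {n \<in> Sym d. (\<lambda>s. n \<circ> s \<circ> inv n) ` U = U}"

definition normalizer2 :: "nat \<Rightarrow> perm set \<Rightarrow> perm set \<Rightarrow> perm set" where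
  "normalizer2 d W W' = normalizer d W \<inter> normalizer d W'"

definition partitions :: "nat \<Rightarrow> nat list set" where
  "partitions d = {lam. sorted_wrt (\<ge>) lam \<and> 0 \<notin> set lam \<and> sum_list lam = d}"

definition tabloids :: "nat \<Rightarrow> nat list \<Rightarrow> nat set list set" where
  "tabloids d lam = {A. length A = length lam \<and>
     (\<forall>i<length A. A ! i \<subseteq> {1..d} \<and> card (A ! i) = lam ! i) \<and>
     (\<forall>i<length A. \<forall>j<length A. i \<noteq> j \<longrightarrow> A ! i \<inter> A ! j = {})}"

definition act :: "perm \<Rightarrow> nat set list \<Rightarrow> nat set list" where
  "act z A = map (\<lambda>X. z ` X) A"

definition orbit :: "perm set \<Rightarrow> nat set list \<Rightarrow> nat set list set" where
  "orbit U A = (\<lambda>s. act s A) ` U"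

definition tab_orbits :: "nat \<Rightarrow> nat list \<Rightarrow> perm set \<Rightarrow> nat set list set set" where
  "tab_orbits d lam U = orbit U ` tabloids d lam"

definition stabilizer :: "perm set \<Rightarrow> nat set list \<Rightarrow> perm set" where
  "stabilizer U A = {s \<in> U. act s A = A}"

text \<open>One-dimensional complex characters of W (homomorphisms W -> C^*),
  extended by 0 outside W so that they are determined by their values on W.\<close>
definition lin_chars :: "perm set \<Rightarrow> (perm \<Rightarrow> complex) set" where
  "lin_chars W = {chi. (\<forall>s\<in>W. \<forall>t\<in>W. chi (s \<circ> t) = chi s * chi t) \<and>
     (\<forall>s\<in>W. chi s \<noteq> 0) \<and> (\<forall>s. s \<notin> W \<longrightarrow> chi s = 0)}"

definition char_act :: "perm \<Rightarrow> (perm \<Rightarrow> complex) \<Rightarrow> (perm \<Rightarrow> complex)" where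
  "char_act n chi = (\<lambda>s. chi (inv n \<circ> s \<circ> n))"

definition tab_chi :: "nat \<Rightarrow> nat list \<Rightarrow> perm set \<Rightarrow> (perm \<Rightarrow> complex) \<Rightarrow> nat set list set set" where
  "tab_chi d lam W chi = {orbit W A | A. A \<in> tabloids d lam \<and>
     (\<forall>s\<in>stabilizer W A. chi s = 1)}"

definition separates :: "nat \<Rightarrow> nat list \<Rightarrow> perm set \<Rightarrow> (perm \<Rightarrow> complex) \<Rightarrow>
    nat set list set \<Rightarrow> nat set list set \<Rightarrow> bool" where
  "separates d lam W chi a b \<longleftrightarrow> a \<in> tab_chi d lam W chi \<and> b \<notin> tab_chi d lam W chi"

end

theory Submission
  imports Defs
begin

text \<open>A subgroup of index two is normal, so every \<open>t \<in> W'\<close> normalizes both \<open>W\<close> and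
  \<open>W'\<close>. Choose \<open>t \<in> W'\<close> carrying a representative of \<open>a\<close> to one of \<open>a\<^sub>1\<close>. Since
  \<open>a \<noteq> a\<^sub>1\<close> we have \<open>t \<notin> W\<close>, hence \<open>t\<^sup>2 \<in> W\<close>, so \<open>t\<close> interchanges \<open>a\<close> and \<open>a\<^sub>1\<close>.
  Transport of structure along \<open>t\<close> shows that \<open>O\<^sub>W(A)\<close> lies in \<open>T\<^sub>\<lambda>\<^sub>;\<^sub>\<chi>\<close> iff
  \<open>O\<^sub>W(tA)\<close> lies in \<open>T\<^sub>\<lambda>\<^sub>;\<^sub>t\<^sub>\<chi>\<close>, so \<open>t\<chi>\<close> separates \<open>a\<^sub>1\<close> from \<open>a\<close> whenever \<open>\<chi>\<close>
  separates \<open>a\<close> from \<open>a\<^sub>1\<close>, and conversely.\<close>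

lemma Sym_finite: "finite (Sym d)"
  by (simp add: Sym_def finite_permutations)

lemma Sym_inv: "p \<in> Sym d \<Longrightarrow> inv p \<in> Sym d"
  by (simp add: Sym_def permutes_inv)

lemma Sym_inv_inv: "p \<in> Sym d \<Longrightarrow> inv (inv p) = p"
  by (simp add: Sym_def permutes_inv_inv)

lemma Sym_inv_comp: "p \<in> Sym d \<Longrightarrow> inv p \<circ> p = id" "p \<in> Sym d \<Longrightarrow> p \<circ> inv p = id"
  by (auto simp: Sym_def permutes_inv_o)

lemma Sym_inverses: "p \<in> Sym d \<Longrightarrow> inv p (p x) = x" "p \<in> Sym d \<Longrightarrow> p (inv p x) = x"
  by (auto simp: Sym_def permutes_inverses)

lemma Sym_comp_cancel_left:
  assumes "p \<in> Sym d" and "p \<circ> f = p \<circ> g"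
  shows "f = g"
proof -
  have "inv p \<circ> p \<circ> f = inv p \<circ> p \<circ> g"
    using assms(2) by (simp add: comp_assoc)
  then show ?thesis
    using Sym_inv_comp(1)[OF assms(1)] by simp
qed

lemma perm_subgroup_Sym: "perm_subgroup d U \<Longrightarrow> u \<in> U \<Longrightarrow> u \<in> Sym d"
  by (auto simp: perm_subgroup_def)

lemma perm_subgroup_comp: "perm_subgroup d U \<Longrightarrow> s \<in> U \<Longrightarrow> t \<in> U \<Longrightarrow> s \<circ> t \<in> U"
  by (simp add: perm_subgroup_def)

lemma perm_subgroup_inv: "perm_subgroup d U \<Longrightarrow> u \<in> U \<Longrightarrow> inv u \<in> U"
  by (simp add: perm_subgroup_def)

lemma perm_subgroup_finite: "perm_subgroup d U \<Longrightarrow> finite U"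
  using Sym_finite finite_subset by (auto simp: perm_subgroup_def)

lemma normalizerI:
  assumes "n \<in> Sym d"
    and "\<And>u. u \<in> U \<Longrightarrow> n \<circ> u \<circ> inv n \<in> U"
    and "\<And>u. u \<in> U \<Longrightarrow> inv n \<circ> u \<circ> n \<in> U"
  shows "n \<in> normalizer d U"
proof -
  have "u \<in> (\<lambda>s. n \<circ> s \<circ> inv n) ` U" if "u \<in> U" for u
  proof
    show "u = n \<circ> (inv n \<circ> u \<circ> n) \<circ> inv n"
      by (simp add: fun_eq_iff Sym_inverses[OF assms(1)])
  qed (use assms(3) that in blast)
  then show ?thesis
    using assms(1,2) by (auto simp: normalizer_def)
qed

lemma normalizer_conj_mem:
  assumes "n \<in> normalizer d U" and "u \<in> U"
  shows "n \<circ> u \<circ> inv n \<in> U" and "inv n \<circ> u \<circ> n \<in> U"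
proof -
  have n: "n \<in> Sym d" and img: "(\<lambda>s. n \<circ> s \<circ> inv n) ` U = U"
    using assms(1) by (auto simp: normalizer_def)
  show "n \<circ> u \<circ> inv n \<in> U"
    using img assms(2) by blast
  obtain v where "v \<in> U" "u = n \<circ> v \<circ> inv n"
    using img assms(2) by blast
  moreover have "inv n \<circ> (n \<circ> v \<circ> inv n) \<circ> n = v"
    by (simp add: fun_eq_iff Sym_inverses[OF n])
  ultimately show "inv n \<circ> u \<circ> n \<in> U"
    by simp
qed

lemma normalizer_inv: "n \<in> normalizer d U \<Longrightarrow> inv n \<in> normalizer d U"
  by (intro normalizerI)
    (auto simp: normalizer_conj_mem Sym_inv Sym_inv_inv normalizer_def)

lemma subgroup_subset_normalizer:
  assumes "perm_subgroup d V" and "\<And>t u. t \<in> V \<Longrightarrow> u \<in> U \<Longrightarrow> t \<circ> u \<circ> inv t \<in> U"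
  shows "V \<subseteq> normalizer d U"
proof
  fix t assume t: "t \<in> V"
  have "inv t \<circ> u \<circ> inv (inv t) \<in> U" if "u \<in> U" for u
    using assms that perm_subgroup_inv[OF assms(1) t] by blast
  then show "t \<in> normalizer d U"
    using normalizerI[of t d U] assms t perm_subgroup_Sym Sym_inv_inv by metis
qed

lemma subgroup_subset_own_normalizer: "perm_subgroup d U \<Longrightarrow> U \<subseteq> normalizer d U"
  by (intro subgroup_subset_normalizer) (auto intro: perm_subgroup_comp perm_subgroup_inv)

locale index_two_subgroup =
  fixes d :: nat and W W' :: "perm set"
  assumes subgroup: "perm_subgroup d W" and supergroup: "perm_subgroup d W'"
    and subset: "W \<subseteq> W'" and card_eq: "card W' = 2 * card W"
begin

lemma coset_decomposition:
  assumes t: "t \<in> W'" "t \<notin> W"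
  shows "W' = W \<union> (\<lambda>w. t \<circ> w) ` W"
proof -
  have tS: "t \<in> Sym d"
    using perm_subgroup_Sym[OF supergroup t(1)] .
  have fin: "finite W" "finite W'"
    using perm_subgroup_finite subgroup supergroup by blast+
  have inj: "inj_on (\<lambda>w. t \<circ> w) W"
    using Sym_comp_cancel_left[OF tS] by (auto intro: inj_onI)
  have disj: "W \<inter> (\<lambda>w. t \<circ> w) ` W = {}"
  proof (rule ccontr)
    assume "W \<inter> (\<lambda>w. t \<circ> w) ` W \<noteq> {}"
    then obtain w where w: "w \<in> W" "t \<circ> w \<in> W" by auto
    then have "t \<circ> w \<circ> inv w \<in> W"
      by (meson perm_subgroup_comp perm_subgroup_inv subgroup)
    moreover have "t \<circ> w \<circ> inv w = t"
      using Sym_inv_comp(2)[OF perm_subgroup_Sym[OF subgroup w(1)]] by (simp add: comp_assoc)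
    ultimately show False
      using t(2) by simp
  qed
  have sub: "W \<union> (\<lambda>w. t \<circ> w) ` W \<subseteq> W'"
    using subset t(1) perm_subgroup_comp[OF supergroup] by auto
  have "card (W \<union> (\<lambda>w. t \<circ> w) ` W) = card W'"
    using card_Un_disjoint[OF fin(1) finite_imageI[OF fin(1)] disj] card_image[OF inj] card_eq
    by simp
  then show ?thesis
    using card_subset_eq[OF fin(2) sub] by simp
qed

lemma comp_outside_mem:
  assumes s: "s \<in> W'" "s \<notin> W" and t: "t \<in> W'" "t \<notin> W"
  shows "s \<circ> t \<in> W"
proof (rule ccontr)
  assume "s \<circ> t \<notin> W"
  moreover have "s \<circ> t \<in> W'"
    using perm_subgroup_comp[OF supergroup s(1) t(1)] .
  ultimately obtain v where "v \<in> W" "s \<circ> t = s \<circ> v"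
    using coset_decomposition[OF s] by auto
  then show False
    using Sym_comp_cancel_left[OF perm_subgroup_Sym[OF supergroup s(1)]] t(2) by blast
qed

lemma conj_mem:
  assumes t: "t \<in> W'" and w: "w \<in> W"
  shows "t \<circ> w \<circ> inv t \<in> W"
proof (cases "t \<in> W")
  case True
  then show ?thesis
    using w by (meson perm_subgroup_comp perm_subgroup_inv subgroup)
next
  case False
  have "t \<circ> w \<notin> W"
  proof
    assume "t \<circ> w \<in> W"
    then have "t \<circ> w \<circ> inv w \<in> W"
      by (meson perm_subgroup_comp perm_subgroup_inv subgroup w)
    then show False
      using False Sym_inv_comp(2)[OF perm_subgroup_Sym[OF subgroup w]] by (simp add: comp_assoc)
  qed
  moreover have "inv t \<notin> W"
    using False perm_subgroup_inv[OF subgroup] Sym_inv_inv[OF perm_subgroup_Sym[OF supergroup t]]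
    by metis
  ultimately show ?thesis
    using comp_outside_mem t w subset perm_subgroup_comp[OF supergroup]
      perm_subgroup_inv[OF supergroup] by blast
qed

lemma supergroup_subset_normalizer2: "W' \<subseteq> normalizer2 d W W'"
  using subgroup_subset_normalizer[OF supergroup conj_mem]
    subgroup_subset_own_normalizer[OF supergroup]
  by (simp add: normalizer2_def)

end

lemma act_comp: "act (s \<circ> t) A = act s (act t A)"
  by (simp add: act_def image_comp)

lemma act_id: "act id A = A"
  by (simp add: act_def)

lemma act_inv: "p \<in> Sym d \<Longrightarrow> act (inv p) (act p A) = A"
  by (metis act_comp act_id Sym_inv_comp(1))

lemma tabloids_act:
  assumes p: "p \<in> Sym d" and A: "A \<in> tabloids d lam"
  shows "act p A \<in> tabloids d lam"
proof -
  have perm: "p permutes {1..d}"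
    using p by (simp add: Sym_def)
  then have inj: "inj p" and img: "p ` {1..d} = {1..d}"
    by (auto simp: permutes_inj permutes_image)
  have "p ` X \<subseteq> {1..d}" and "card (p ` X) = card X" if "X \<subseteq> {1..d}" for X
    using that img card_image[OF inj_on_subset[OF inj]] by auto
  moreover have "p ` X \<inter> p ` Y = {}" if "X \<inter> Y = {}" for X Y
    using that image_Int[OF inj] by (metis image_empty)
  ultimately show ?thesis
    using A by (auto simp: tabloids_def act_def)
qed

lemma orbit_self: "perm_subgroup d U \<Longrightarrow> A \<in> orbit U A"
  unfolding orbit_def perm_subgroup_def by (metis act_id image_eqI)

lemma orbit_act:
  assumes U: "perm_subgroup d U" and u: "u \<in> U"
  shows "orbit U (act u A) = orbit U A"
proof
  show "orbit U (act u A) \<subseteq> orbit U A"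
    using U u by (auto simp: orbit_def perm_subgroup_def act_comp[symmetric])
  show "orbit U A \<subseteq> orbit U (act u A)"
  proof
    fix B assume "B \<in> orbit U A"
    then obtain s where s: "s \<in> U" "B = act s A"
      by (auto simp: orbit_def)
    have "act (s \<circ> inv u) (act u A) = B"
      using s act_inv[OF perm_subgroup_Sym[OF U u]] by (simp add: act_comp)
    moreover have "s \<circ> inv u \<in> U"
      using U u s by (simp add: perm_subgroup_comp perm_subgroup_inv)
    ultimately show "B \<in> orbit U (act u A)"
      unfolding orbit_def by blast
  qed
qed

lemma orbit_transporter:
  assumes U: "perm_subgroup d U" and "A \<in> orbit U C" and "B \<in> orbit U C"
  obtains t where "t \<in> U" and "act t A = B"
proof -
  obtain g h where gh: "g \<in> U" "A = act g C" "h \<in> U" "B = act h C"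
    using assms(2,3) by (auto simp: orbit_def)
  show ?thesis
  proof
    show "h \<circ> inv g \<in> U"
      using U gh by (simp add: perm_subgroup_comp perm_subgroup_inv)
    show "act (h \<circ> inv g) A = B"
      using gh act_inv[OF perm_subgroup_Sym[OF U gh(1)]] by (simp add: act_comp)
  qed
qed

lemma char_act_inv:
  assumes "t \<in> Sym d"
  shows "char_act (inv t) (char_act t chi) = chi"
proof -
  have "inv t \<circ> (t \<circ> s \<circ> inv t) \<circ> t = s" for s
    by (simp add: fun_eq_iff Sym_inverses[OF assms])
  then show ?thesis
    by (simp add: char_act_def Sym_inv_inv[OF assms])
qed

lemma tab_chi_act:
  assumes W: "perm_subgroup d W" and t: "t \<in> normalizer d W"
    and A: "orbit W A \<in> tab_chi d lam W chi"
  shows "orbit W (act t A) \<in> tab_chi d lam W (char_act t chi)"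
proof -
  have tS: "t \<in> Sym d"
    using t by (simp add: normalizer_def)
  obtain B where B: "orbit W A = orbit W B" "B \<in> tabloids d lam"
    and chi_stab: "\<forall>s\<in>stabilizer W B. chi s = 1"
    using A unfolding tab_chi_def by blast
  obtain w where w: "w \<in> W" "B = act w A"
    using B(1) orbit_self[OF W, of B] by (auto simp: orbit_def)
  have "act t B = act (t \<circ> w \<circ> inv t) (act t A)"
    using w(2) act_inv[OF tS] by (simp add: act_comp)
  then have orbit_eq: "orbit W (act t B) = orbit W (act t A)"
    using orbit_act[OF W normalizer_conj_mem(1)[OF t w(1)]] by simp
  have "char_act t chi s = 1" if s: "s \<in> stabilizer W (act t B)" for s
  proof -
    have "act (inv t \<circ> s \<circ> t) B = act (inv t) (act s (act t B))"
      by (simp add: act_comp)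
    also have "\<dots> = B"
      using s act_inv[OF tS] by (simp add: stabilizer_def)
    finally have "inv t \<circ> s \<circ> t \<in> stabilizer W B"
      using s normalizer_conj_mem(2)[OF t] by (simp add: stabilizer_def)
    then show ?thesis
      using chi_stab by (simp add: char_act_def)
  qed
  then show ?thesis
    unfolding tab_chi_def using orbit_eq tabloids_act[OF tS B(2)] by blast
qed

lemma tab_chi_act_iff:
  assumes W: "perm_subgroup d W" and t: "t \<in> normalizer d W"
  shows "orbit W (act t A) \<in> tab_chi d lam W (char_act t chi) \<longleftrightarrow>
    orbit W A \<in> tab_chi d lam W chi"
proof
  have tS: "t \<in> Sym d"
    using t by (simp add: normalizer_def)
  assume "orbit W (act t A) \<in> tab_chi d lam W (char_act t chi)"
  from tab_chi_act[OF W normalizer_inv[OF t] this]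
  show "orbit W A \<in> tab_chi d lam W chi"
    by (simp add: act_inv[OF tS] char_act_inv[OF tS])
qed (rule tab_chi_act[OF W t])

lemma separates_act:
  assumes "perm_subgroup d W" and "t \<in> normalizer d W"
    and "separates d lam W chi (orbit W A) (orbit W B)"
  shows "separates d lam W (char_act t chi) (orbit W (act t A)) (orbit W (act t B))"
  using assms by (simp add: separates_def tab_chi_act_iff)

lemma (in index_two_subgroup) swapping_element:
  assumes "A \<in> orbit W' C" and "B \<in> orbit W' C" and "orbit W A \<noteq> orbit W B"
  obtains t where "t \<in> W'" and "orbit W (act t A) = orbit W B" and "orbit W (act t B) = orbit W A"
proof -
  obtain t where t: "t \<in> W'" "act t A = B"
    using orbit_transporter[OF supergroup assms(1,2)] .
  have "t \<notin> W"
    using t(2) orbit_act[OF subgroup] assms(3) by metis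
  then have "t \<circ> t \<in> W"
    using comp_outside_mem t(1) by blast
  then have "orbit W (act t B) = orbit W A"
    using t(2) orbit_act[OF subgroup] by (metis act_comp)
  with t that show ?thesis
    by blast
qed

theorem corollary9p2p2:
  fixes d :: nat and W W' :: "perm set" and lam :: "nat list"
    and a a1 :: "nat set list set"
  assumes "d \<ge> 1"
    and "perm_subgroup d W" and "perm_subgroup d W'" and "W \<subseteq> W'"
    and "card W' = 2 * card W"
    and "lam \<in> partitions d"
    and "a \<in> tab_orbits d lam W" and "a1 \<in> tab_orbits d lam W" and "a \<noteq> a1"
    and "\<exists>c \<in> tab_orbits d lam W'. a \<subseteq> c \<and> a1 \<subseteq> c"
  shows "(\<forall>chi \<in> lin_chars W. separates d lam W chi a a1 \<longrightarrow>
            (\<exists>n \<in> normalizer2 d W W'. separates d lam W (char_act n chi) a1 a)) \<and>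
         (\<forall>chi \<in> lin_chars W. separates d lam W chi a1 a \<longrightarrow>
            (\<exists>n \<in> normalizer2 d W W'. separates d lam W (char_act n chi) a a1))"
proof -
  interpret index_two_subgroup d W W'
    using assms(2-5) by unfold_locales
  obtain A B where a: "a = orbit W A" and a1: "a1 = orbit W B"
    using assms(7,8) by (auto simp: tab_orbits_def)
  obtain C where "a \<subseteq> orbit W' C" "a1 \<subseteq> orbit W' C"
    using assms(10) by (auto simp: tab_orbits_def)
  then have "A \<in> orbit W' C" "B \<in> orbit W' C"
    using a a1 orbit_self[OF subgroup] by blast+
  then obtain t where "t \<in> W'" and swap: "orbit W (act t A) = a1" "orbit W (act t B) = a"
    using swapping_element a a1 assms(9) by metis
  then have "t \<in> normalizer2 d W W'" and "t \<in> normalizer d W"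
    using supergroup_subset_normalizer2 by (auto simp: normalizer2_def)
  then show ?thesis
    using separates_act[OF subgroup, of t lam _ A B] separates_act[OF subgroup, of t lam _ B A]
    by (auto simp: a a1 swap)
qed

end
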